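(* Let $\gamma:[t_0,t_1]\to\mathcal V_{n+1}$ be an ordinary admissible evolution, with lift $\hat\gamma:t\mapsto(q^i(t),z^A(t))$ to $\mathcal A$, which is an extremal of the action functional $\mathcal I[\gamma]=\int_{t_0}^{t_1}\mathscr L(t,q(t),z(t))\,dt$ among admissible evolutions with the same end-points. Then there exist functions $p_i(t)$ on $[t_0,t_1]$ such that the curve $\tilde\gamma:t\mapsto(q^i(t),z^A(t),p_i(t))$ in $\mathscr C(\mathcal A)$ is an extremal of the functional $\mathcal I[\tilde\gamma]=\int_{t_0}^{t_1}\big(p_i\,\tfrac{dq^i}{dt}-\mathscr H\big)dt$, $\mathscr H=p_i\psi^i-\mathscr L$, with respect to arbitrary deformations keeping $q^i(t_0),q^i(t_1)$ fixed; equivalently, along $\tilde\gamma$ $$\frac{dp_i}{dt}+p_k\frac{\partial\psi^k}{\partial q^i}=\frac{\partial\mathscr L}{\partial q^i},\qquad p_k\frac{\partial\psi^k}{\partial z^A}=\frac{\partial\mathscr L}{\partial z^A}.$$ In particular $\gamma$ is the projection of at least one such extremal $\tilde\gamma$.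
   Context: $\mathcal V_{n+1}\to\mathbb R$ is a fibre bundle with local fibred coordinates $t,q^1,\dots,q^n$; $\mathcal A\subset j_1(\mathcal V_{n+1})$ is a submanifold fibred over $\mathcal V_{n+1}$ with coordinates $t,q^i,z^A$ ($A=1,\dots,r$), embedded via $\dot q^i=\psi^i(t,q,z)$ with $\operatorname{rank}\|\partial\psi^i/\partial z^A\|=r$; $\mathscr L\in C^\infty(\mathcal A)$. $\mathscr C(\mathcal A)$ is the affine bundle over $\mathcal A$ with local coordinates $t,q^i,z^A,p_i$ (the $p_i$ being fibre coordinates modelled on the pull-back of $V^*(\mathcal V_{n+1})$). An evolution $\gamma:t\mapsto q^i(t)$ is admissible iff it has a lift $\hat\gamma:t\mapsto(q^i(t),z^A(t))$ with $dq^i/dt=\psi^i(t,q,z)$; an admissible deformation is a smooth one-parameter family of admissible evolutions $\gamma_\xi$, $\gamma_0=\gamma$. An admissible infinitesimal deformation of $\hat\gamma$ is a field $X^i\partial/\partial q^i+\Gamma^A\partial/\partial z^A$ along $\hat\gamma$ satisfying $\dot X^i=(\partial\psi^i/\partial q^k)X^k+(\partial\psi^i/\partial z^A)\Gamma^A$. The admissible evolution $\gamma$ is called ordinary iff every admissible infinitesimal deformation with $X^i(t_0)=X^i(t_1)=0$ is tangent (at $\xi=0$) to an admissible deformation $\gamma_\xi$ with fixed end-points. Extremal of $\mathcal I[\gamma]$ means $\frac{d}{d\xi}\mathcal I[\gamma_\xi]|_{\xi=0}=0$ for every admissible deformation with fixed end-points. All curves are differentiable and lie in one coordinate chart. *)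

theory Defs
  imports "HOL-Analysis.Analysis"
begin

text \<open>Points of the (single) chart of the constraint submanifold A have coordinates (t, q, z)
  with q in R^n (index type 'n) and z in R^r (index type 'r).\<close>

definition Cinf_on :: "'a::euclidean_space set \<Rightarrow> ('a \<Rightarrow> real) \<Rightarrow> bool" where
  "Cinf_on U f \<longleftrightarrow>
     (\<exists>F. f \<in> F \<and>
          (\<forall>g\<in>F. continuous_on U g \<and> (\<forall>x\<in>U. g differentiable (at x)) \<and>
                 (\<forall>i\<in>Basis. (\<lambda>x. frechet_derivative g (at x) i) \<in> F)))"

definition pdq :: "(real \<times> (real^'n::finite) \<times> (real^'r::finite) \<Rightarrow> real) \<Rightarrow> real \<times> (real^'n::finite) \<times> (real^'r::finite) \<Rightarrow> 'n \<Rightarrow> real" where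
  "pdq g w k = frechet_derivative g (at w) (0, axis k 1, 0)"

definition pdz :: "(real \<times> (real^'n::finite) \<times> (real^'r::finite) \<Rightarrow> real) \<Rightarrow> real \<times> (real^'n::finite) \<times> (real^'r::finite) \<Rightarrow> 'r \<Rightarrow> real" where
  "pdz g w A = frechet_derivative g (at w) (0, 0, axis A 1)"

definition admissible_lift ::
  "(real \<times> (real^'n::finite) \<times> (real^'r::finite)) set \<Rightarrow> (real \<times> (real^'n::finite) \<times> (real^'r::finite) \<Rightarrow> real^'n) \<Rightarrow> real \<Rightarrow> real
    \<Rightarrow> (real \<Rightarrow> real^'n) \<Rightarrow> (real \<Rightarrow> real^'r) \<Rightarrow> bool" where
  "admissible_lift U \<psi> t0 t1 q z \<longleftrightarrow>
     (\<forall>t\<in>{t0..t1}. (t, q t, z t) \<in> U \<and>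
        (q has_vector_derivative \<psi> (t, q t, z t)) (at t within {t0..t1}) \<and>
        z differentiable (at t within {t0..t1}))"

definition C1_family :: "('a::real_normed_vector) set \<Rightarrow> ('a \<Rightarrow> 'b::real_normed_vector) \<Rightarrow> bool" where
  "C1_family S F \<longleftrightarrow>
     (\<exists>F'. (\<forall>w\<in>S. (F has_derivative F' w) (at w within S)) \<and>
           (\<forall>h. continuous_on S (\<lambda>w. F' w h)))"

definition adm_deformation ::
  "(real \<times> (real^'n::finite) \<times> (real^'r::finite)) set \<Rightarrow> (real \<times> (real^'n::finite) \<times> (real^'r::finite) \<Rightarrow> real^'n) \<Rightarrow> real \<Rightarrow> real
    \<Rightarrow> (real \<Rightarrow> real^'n) \<Rightarrow> (real \<Rightarrow> real^'r)
    \<Rightarrow> (real \<Rightarrow> real \<Rightarrow> real^'n) \<Rightarrow> (real \<Rightarrow> real \<Rightarrow> real^'r) \<Rightarrow> bool" where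
  "adm_deformation U \<psi> t0 t1 q z Q Z \<longleftrightarrow>
     (\<exists>\<epsilon>>0.
        (\<forall>\<xi>\<in>{-\<epsilon><..<\<epsilon>}. admissible_lift U \<psi> t0 t1 (Q \<xi>) (Z \<xi>) \<and>
                          Q \<xi> t0 = q t0 \<and> Q \<xi> t1 = q t1) \<and>
        (\<forall>t\<in>{t0..t1}. Q 0 t = q t \<and> Z 0 t = z t) \<and>
        C1_family ({-\<epsilon><..<\<epsilon>} \<times> {t0..t1}) (\<lambda>(\<xi>, t). (Q \<xi> t, Z \<xi> t)))"

definition adm_inf_deformation ::
  "(real \<times> (real^'n::finite) \<times> (real^'r::finite) \<Rightarrow> real^'n) \<Rightarrow> real \<Rightarrow> real
    \<Rightarrow> (real \<Rightarrow> real^'n) \<Rightarrow> (real \<Rightarrow> real^'r)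
    \<Rightarrow> (real \<Rightarrow> real^'n) \<Rightarrow> (real \<Rightarrow> real^'r) \<Rightarrow> bool" where
  "adm_inf_deformation \<psi> t0 t1 q z X G \<longleftrightarrow>
     (\<forall>t\<in>{t0..t1}.
        (X has_vector_derivative
           (\<chi> i. (\<Sum>k\<in>UNIV. pdq (\<lambda>w. \<psi> w $ i) (t, q t, z t) k * X t $ k) +
                 (\<Sum>A\<in>UNIV. pdz (\<lambda>w. \<psi> w $ i) (t, q t, z t) A * G t $ A)))
          (at t within {t0..t1}) \<and>
        G differentiable (at t within {t0..t1}))"

definition ordinary ::
  "(real \<times> (real^'n::finite) \<times> (real^'r::finite)) set \<Rightarrow> (real \<times> (real^'n::finite) \<times> (real^'r::finite) \<Rightarrow> real^'n) \<Rightarrow> real \<Rightarrow> real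
    \<Rightarrow> (real \<Rightarrow> real^'n) \<Rightarrow> (real \<Rightarrow> real^'r) \<Rightarrow> bool" where
  "ordinary U \<psi> t0 t1 q z \<longleftrightarrow>
     (\<forall>X G. adm_inf_deformation \<psi> t0 t1 q z X G \<and> X t0 = 0 \<and> X t1 = 0 \<longrightarrow>
        (\<exists>Q Z. adm_deformation U \<psi> t0 t1 q z Q Z \<and>
           (\<forall>t\<in>{t0..t1}. ((\<lambda>\<xi>. Q \<xi> t) has_vector_derivative X t) (at 0) \<and>
                          ((\<lambda>\<xi>. Z \<xi> t) has_vector_derivative G t) (at 0))))"

definition extremal ::
  "(real \<times> (real^'n::finite) \<times> (real^'r::finite)) set \<Rightarrow> (real \<times> (real^'n::finite) \<times> (real^'r::finite) \<Rightarrow> real^'n)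
    \<Rightarrow> (real \<times> (real^'n::finite) \<times> (real^'r::finite) \<Rightarrow> real) \<Rightarrow> real \<Rightarrow> real
    \<Rightarrow> (real \<Rightarrow> real^'n) \<Rightarrow> (real \<Rightarrow> real^'r) \<Rightarrow> bool" where
  "extremal U \<psi> L t0 t1 q z \<longleftrightarrow>
     (\<forall>Q Z. adm_deformation U \<psi> t0 t1 q z Q Z \<longrightarrow>
        ((\<lambda>\<xi>. integral {t0..t1} (\<lambda>t. L (t, Q \<xi> t, Z \<xi> t))) has_real_derivative 0) (at 0))"

end

theory Submission
  imports Defs
begin

text \<open>
  Along the lift \<open>(q, z)\<close> write \<open>A = \<partial>\<psi>/\<partial>q\<close>, \<open>B = \<partial>\<psi>/\<partial>z\<close>. By differentiation under the
  integral, the first variation of the action along an admissible deformation with tangent \<open>(X, G)\<close>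
  is \<open>J(X, G) = \<integral> (\<partial>L/\<partial>q \<bullet> X + \<partial>L/\<partial>z \<bullet> G)\<close>, where \<open>X' = A X + B G\<close> and \<open>X(t0) = 0\<close>.
  Ordinariness and extremality make \<open>J\<close> vanish whenever \<open>X(t1) = 0\<close>, so the linear functional
  \<open>J\<close> factors through the end value: \<open>J(X, G) = c \<bullet> X(t1)\<close> for some covector \<open>c\<close>. Let \<open>p\<close> solve
  the adjoint equation \<open>p' = - A\<^sup>T p + \<partial>L/\<partial>q\<close> with \<open>p(t1) = c\<close>. Integrating \<open>(p \<bullet> X)'\<close> gives
  \<open>J(X, G) = c \<bullet> X(t1) + \<integral> (\<partial>L/\<partial>z - B\<^sup>T p) \<bullet> G\<close>, and the control \<open>G = \<partial>L/\<partial>z - B\<^sup>T p\<close> then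
  forces \<open>\<integral> |G|\<^sup>2 = 0\<close>, i.e. \<open>B\<^sup>T p = \<partial>L/\<partial>z\<close>.
\<close>

section \<open>Linear ODEs by Picard iteration\<close>

lemma has_integral_power_shifted:
  fixes a t :: real
  assumes "a \<le> t"
  shows "((\<lambda>s. (s - a) ^ k) has_integral (t - a) ^ Suc k / Suc k) {a..t}"
proof -
  have "((\<lambda>s. (s - a) ^ Suc k / Suc k) has_real_derivative (s - a) ^ k) (at s within {a..t})" for s
    using DERIV_cdivide[OF DERIV_power[OF DERIV_diff[OF DERIV_ident DERIV_const[of a]]], of "Suc k" "Suc k"]
    by simp
  then have "((\<lambda>s. (s - a) ^ k) has_integral (t - a) ^ Suc k / Suc k - (a - a) ^ Suc k / Suc k) {a..t}"
    by (intro fundamental_theorem_of_calculus[OF assms])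
      (simp add: has_real_derivative_iff_has_vector_derivative)
  then show ?thesis by simp
qed

lemma integrable_continuous_initial_segment:
  fixes g :: "real \<Rightarrow> 'a::banach"
  shows "continuous_on {a..b} g \<Longrightarrow> t \<in> {a..b} \<Longrightarrow> g integrable_on {a..t}"
  by (rule integrable_continuous_interval) (auto elim!: continuous_on_subset)

primrec picard_iterate :: "(real \<Rightarrow> 'a \<Rightarrow> 'a) \<Rightarrow> real \<Rightarrow> 'a \<Rightarrow> nat \<Rightarrow> real \<Rightarrow> 'a::banach" where
  "picard_iterate f a x0 0 = (\<lambda>t. x0)"
| "picard_iterate f a x0 (Suc k) = (\<lambda>t. x0 + integral {a..t} (\<lambda>s. f s (picard_iterate f a x0 k s)))"

context
  fixes f :: "real \<Rightarrow> 'a::banach \<Rightarrow> 'a" and a b K :: real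
  assumes continuous_f: "\<And>g. continuous_on {a..b} g \<Longrightarrow> continuous_on {a..b} (\<lambda>t. f t (g t))"
    and lipschitz_f: "\<And>t x y. t \<in> {a..b} \<Longrightarrow> norm (f t x - f t y) \<le> K * norm (x - y)"
    and K_pos: "K > 0"
begin

lemma continuous_on_picard_iterate: "continuous_on {a..b} (picard_iterate f a x0 k)"
proof (induction k)
  case (Suc k)
  have "continuous_on {a..b} (\<lambda>t. integral {a..t} (\<lambda>s. f s (picard_iterate f a x0 k s)))"
    by (intro indefinite_integral_continuous_1 integrable_continuous_interval continuous_f Suc)
  then show ?case by (auto intro: continuous_intros)
qed simp

lemma picard_iterate_diff_bound:
  assumes C: "\<And>t. t \<in> {a..b} \<Longrightarrow> norm (f t x0) \<le> C" and t: "t \<in> {a..b}"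
  shows "norm (picard_iterate f a x0 (Suc k) t - picard_iterate f a x0 k t)
           \<le> C * K ^ k * (t - a) ^ Suc k / fact (Suc k)"
  using t
proof (induction k arbitrary: t)
  case 0
  have "norm (integral {a..t} (\<lambda>s. f s x0)) \<le> integral {a..t} (\<lambda>s. C)"
    using 0 continuous_f[of "\<lambda>_. x0"]
    by (intro integral_norm_bound_integral integrable_continuous_initial_segment) (auto intro: C)
  with 0 show ?case by (simp add: mult.commute)
next
  case (Suc k)
  let ?P = "picard_iterate f a x0"
  define c where "c = C * K ^ Suc k / fact (Suc k)"
  have power_integral: "((\<lambda>s. c * (s - a) ^ Suc k) has_integral c * ((t - a) ^ Suc (Suc k) / Suc (Suc k))) {a..t}"
    using Suc.prems by (intro has_integral_mult_right has_integral_power_shifted) auto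
  have integrable_iterate: "(\<lambda>s. f s (?P j s)) integrable_on {a..t}" for j
    using Suc.prems by (rule integrable_continuous_initial_segment[OF continuous_f[OF continuous_on_picard_iterate]])
  have "?P (Suc (Suc k)) t - ?P (Suc k) t = integral {a..t} (\<lambda>s. f s (?P (Suc k) s) - f s (?P k s))"
    by (simp only: integral_diff[OF integrable_iterate integrable_iterate]) simp
  also have "norm \<dots> \<le> integral {a..t} (\<lambda>s. c * (s - a) ^ Suc k)"
  proof (rule integral_norm_bound_integral)
    show "(\<lambda>s. f s (?P (Suc k) s) - f s (?P k s)) integrable_on {a..t}"
      by (intro integrable_diff integrable_iterate)
    show "(\<lambda>s. c * (s - a) ^ Suc k) integrable_on {a..t}"
      using power_integral by blast
    fix s assume s: "s \<in> {a..t}"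
    then have s': "s \<in> {a..b}" using Suc.prems by auto
    have "norm (f s (?P (Suc k) s) - f s (?P k s)) \<le> K * norm (?P (Suc k) s - ?P k s)"
      by (rule lipschitz_f[OF s'])
    also have "\<dots> \<le> K * (C * K ^ k * (s - a) ^ Suc k / fact (Suc k))"
      using Suc.IH[OF s'] K_pos by (intro mult_left_mono) auto
    finally show "norm (f s (?P (Suc k) s) - f s (?P k s)) \<le> c * (s - a) ^ Suc k"
      by (simp add: c_def field_simps)
  qed
  also have "\<dots> = c * ((t - a) ^ Suc (Suc k) / Suc (Suc k))"
    using power_integral by (rule integral_unique)
  also have "\<dots> = C * K ^ Suc k * (t - a) ^ Suc (Suc k) / fact (Suc (Suc k))"
    by (simp add: c_def field_simps del: of_nat_Suc)
  finally show ?case .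
qed

lemma picard_iterate_uniform_limit:
  obtains x where "uniform_limit {a..b} (picard_iterate f a x0) x sequentially"
proof -
  let ?P = "picard_iterate f a x0"
  have "bounded ((\<lambda>t. f t x0) ` {a..b})"
    using continuous_f[of "\<lambda>_. x0"] by (intro compact_imp_bounded compact_continuous_image) auto
  then obtain C where C: "\<And>t. t \<in> {a..b} \<Longrightarrow> norm (f t x0) \<le> C"
    unfolding bounded_iff by blast
  define M where "M i = C * (b - a) * (inverse (fact i) * (K * (b - a)) ^ i)" for i
  have M: "norm (?P (Suc i) t - ?P i t) \<le> M i" if t: "t \<in> {a..b}" for i t
  proof -
    have "0 \<le> C" using C[OF t] norm_ge_zero order_trans by blast
    have "(t - a) ^ Suc i \<le> (b - a) ^ Suc i" using t by (intro power_mono) auto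
    then have "C * K ^ i * (t - a) ^ Suc i / fact (Suc i) \<le> C * K ^ i * (b - a) ^ Suc i / fact i"
      using \<open>0 \<le> C\<close> K_pos t by (intro frac_le mult_left_mono fact_mono) auto
    also have "\<dots> = M i" by (simp add: M_def power_mult_distrib divide_inverse)
    finally show ?thesis using picard_iterate_diff_bound[OF C t] order_trans by blast
  qed
  have summable_M: "summable M"
    unfolding M_def by (intro summable_mult summable_exp)
  have telescope: "(\<Sum>i<n. ?P (Suc i) t - ?P i t) = ?P n t - x0" for n t
    using sum_lessThan_telescope[of "\<lambda>i. ?P i t" n] by simp
  have "uniform_limit {a..b} (\<lambda>n t. ?P n t - x0) (\<lambda>t. \<Sum>i. ?P (Suc i) t - ?P i t) sequentially"
    using Weierstrass_m_test[of "{a..b}" "\<lambda>i t. ?P (Suc i) t - ?P i t", OF M summable_M] unfolding telescope .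
  then have "uniform_limit {a..b} ?P (\<lambda>t. x0 + (\<Sum>i. ?P (Suc i) t - ?P i t)) sequentially"
    unfolding uniform_limit_iff by (simp add: dist_norm algebra_simps)
  then show thesis by (rule that)
qed

lemma picard_limit_fixed_point:
  assumes x: "uniform_limit {a..b} (picard_iterate f a x0) x sequentially" and t: "t \<in> {a..b}"
  shows "x t = x0 + integral {a..t} (\<lambda>s. f s (x s))"
proof -
  let ?P = "picard_iterate f a x0"
  have "uniform_limit {a..b} (\<lambda>n s. f s (?P n s)) (\<lambda>s. f s (x s)) sequentially"
    unfolding uniform_limit_iff
  proof (intro allI impI)
    fix e :: real assume "e > 0"
    with x K_pos have "\<forall>\<^sub>F n in sequentially. \<forall>s\<in>{a..b}. dist (?P n s) (x s) < e / K"
      unfolding uniform_limit_iff by auto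
    then show "\<forall>\<^sub>F n in sequentially. \<forall>s\<in>{a..b}. dist (f s (?P n s)) (f s (x s)) < e"
    proof (rule eventually_mono, intro ballI)
      fix n s assume close: "\<forall>s\<in>{a..b}. dist (?P n s) (x s) < e / K" and s: "s \<in> {a..b}"
      have "dist (f s (?P n s)) (f s (x s)) \<le> K * dist (?P n s) (x s)"
        using lipschitz_f[OF s] by (simp add: dist_norm)
      also have "\<dots> < e" using close s K_pos by (simp add: field_simps)
      finally show "dist (f s (?P n s)) (f s (x s)) < e" .
    qed
  qed
  then have "uniform_limit {a..t} (\<lambda>n s. f s (?P n s)) (\<lambda>s. f s (x s)) sequentially"
    by (rule uniform_limit_on_subset) (use t in auto)
  then obtain I J where I: "\<And>n. ((\<lambda>s. f s (?P n s)) has_integral I n) {a..t}"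
    and J: "((\<lambda>s. f s (x s)) has_integral J) {a..t}" and "I \<longlonglongrightarrow> J"
    by (rule uniform_limit_integral)
      (use t in \<open>auto intro: continuous_on_subset[OF continuous_f[OF continuous_on_picard_iterate]]\<close>)
  then have "(\<lambda>n. ?P (Suc n) t) \<longlonglongrightarrow> x0 + J"
    by (simp add: integral_unique[OF I] tendsto_add)
  moreover have "(\<lambda>n. ?P (Suc n) t) \<longlonglongrightarrow> x t"
    using tendsto_uniform_limitI[OF x t] by (rule LIMSEQ_Suc)
  ultimately show ?thesis using J LIMSEQ_unique integral_unique by metis
qed

lemma picard_existence:
  "\<exists>x. x a = x0 \<and> (\<forall>t\<in>{a..b}. (x has_vector_derivative f t (x t)) (at t within {a..b}))"
proof -
  obtain x where x: "uniform_limit {a..b} (picard_iterate f a x0) x sequentially"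
    by (rule picard_iterate_uniform_limit)
  have "continuous_on {a..b} (\<lambda>s. f s (x s))"
    by (intro continuous_f uniform_limit_theorem[OF _ x]) (auto simp: continuous_on_picard_iterate)
  then have "((\<lambda>t. x0 + integral {a..t} (\<lambda>s. f s (x s))) has_vector_derivative f t (x t)) (at t within {a..b})"
    if "t \<in> {a..b}" for t
    using that by (auto intro!: derivative_eq_intros integral_has_vector_derivative)
  with picard_limit_fixed_point[OF x] show ?thesis
    by (intro exI[of _ "\<lambda>t. x0 + integral {a..t} (\<lambda>s. f s (x s))"]) auto
qed

end

lemma linear_ode_exists_initial:
  fixes M :: "real \<Rightarrow> real^'n^'n" and c :: "real \<Rightarrow> real^'n"
  assumes continuous_M: "\<And>i j. continuous_on {a..b} (\<lambda>t. M t $ i $ j)"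
    and continuous_c: "continuous_on {a..b} c"
  shows "\<exists>x. x a = x0 \<and> (\<forall>t\<in>{a..b}. (x has_vector_derivative M t *v x t + c t) (at t within {a..b}))"
proof -
  have "\<exists>B. \<forall>t\<in>{a..b}. \<bar>M t $ i $ j\<bar> \<le> B" for i j
    using compact_imp_bounded[OF compact_continuous_image[OF continuous_M]]
    by (force simp: bounded_real)
  then obtain B where B: "\<And>i j t. t \<in> {a..b} \<Longrightarrow> \<bar>M t $ i $ j\<bar> \<le> B i j" by metis
  define K where "K = 1 + CARD('n) * real CARD('n) * (\<Sum>i\<in>UNIV. \<Sum>j\<in>UNIV. \<bar>B i j\<bar>)"
  have lipschitz: "norm ((M t *v x + c t) - (M t *v y + c t)) \<le> K * norm (x - y)"
    if t: "t \<in> {a..b}" for t x y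
  proof -
    have "\<bar>M t $ i $ j\<bar> \<le> (\<Sum>i\<in>UNIV. \<Sum>j\<in>UNIV. \<bar>B i j\<bar>)" for i j
      using B[OF t, of i j] member_le_sum[of i UNIV "\<lambda>i. \<Sum>j\<in>UNIV. \<bar>B i j\<bar>"]
        member_le_sum[of j UNIV "\<lambda>j. \<bar>B i j\<bar>"] by (force intro: sum_nonneg)
    then have "onorm ((*v) (M t)) \<le> K"
      using onorm_le_matrix_component[of "M t"] unfolding K_def by fastforce
    moreover have "norm (M t *v (x - y)) \<le> onorm ((*v) (M t)) * norm (x - y)"
      by (intro onorm matrix_vector_mul_bounded_linear)
    ultimately show ?thesis
      by (simp add: matrix_vector_mult_diff_distrib) (meson mult_right_mono norm_ge_zero order_trans)
  qed
  have "continuous_on {a..b} (\<lambda>t. M t *v g t + c t)" if "continuous_on {a..b} g" for g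
    unfolding matrix_vector_mult_def by (intro continuous_intros continuous_M continuous_c that)
  moreover have "K > 0" unfolding K_def by (simp add: add_pos_nonneg sum_nonneg)
  ultimately show ?thesis
    using picard_existence[of a b "\<lambda>t x. M t *v x + c t" K] lipschitz by simp
qed

lemma linear_ode_exists_final:
  fixes M :: "real \<Rightarrow> real^'n^'n" and c :: "real \<Rightarrow> real^'n"
  assumes continuous_M: "\<And>i j. continuous_on {a..b} (\<lambda>t. M t $ i $ j)"
    and continuous_c: "continuous_on {a..b} c"
  shows "\<exists>x. x b = x1 \<and> (\<forall>t\<in>{a..b}. (x has_vector_derivative M t *v x t + c t) (at t within {a..b}))"
proof -
  define r where "r s = a + b - s" for s :: real
  have r_image: "r ` {a..b} = {a..b}" and r_r: "r (r s) = s" for s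
    unfolding r_def by (auto simp: image_iff intro!: bexI[of _ "a + b - _"])
  have continuous_r: "continuous_on {a..b} r" unfolding r_def by (intro continuous_intros)
  have "continuous_on {a..b} (\<lambda>t. (- M (r t)) $ i $ j)" for i j
    using continuous_on_minus[OF continuous_on_compose2[OF continuous_M continuous_r]] by (simp add: r_image)
  moreover have "continuous_on {a..b} (\<lambda>t. - c (r t))"
    by (intro continuous_on_minus continuous_on_compose2[OF continuous_c continuous_r]) (simp add: r_image)
  ultimately obtain y where "y a = x1" and y:
    "\<And>t. t \<in> {a..b} \<Longrightarrow> (y has_vector_derivative (- M (r t)) *v y t - c (r t)) (at t within {a..b})"
    using linear_ode_exists_initial[of a b "\<lambda>t. - M (r t)" "\<lambda>t. - c (r t)"] by fastforce
  have "((y \<circ> r) has_vector_derivative M t *v (y \<circ> r) t + c t) (at t within {a..b})"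
    if t: "t \<in> {a..b}" for t
  proof -
    have "(r has_vector_derivative -1) (at t within {a..b})"
      unfolding r_def by (auto intro!: derivative_eq_intros)
    moreover have "r t \<in> {a..b}" using t r_image by blast
    ultimately have "((y \<circ> r) has_vector_derivative (-1) *\<^sub>R ((- M t) *v y (r t) - c t)) (at t within {a..b})"
      using vector_diff_chain_within y r_image r_r by metis
    moreover have "(-1) *\<^sub>R ((- M t) *v y (r t) - c t) = M t *v (y \<circ> r) t + c t"
      by (simp add: matrix_vector_mult_def vec_eq_iff sum_negf)
    ultimately show ?thesis by argo
  qed
  with \<open>y a = x1\<close> show ?thesis by (intro exI[of _ "y \<circ> r"]) (auto simp: r_def)
qed

section \<open>Linear control systems and the adjoint equation\<close>

lemma differentiable_vec_componentwise:
  fixes f :: "real \<Rightarrow> real^'n"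
  shows "f differentiable (at x within S) \<longleftrightarrow> (\<forall>i. (\<lambda>t. f t $ i) differentiable (at x within S))"
proof
  assume "f differentiable (at x within S)"
  then show "\<forall>i. (\<lambda>t. f t $ i) differentiable (at x within S)"
    using bounded_linear.has_derivative[OF bounded_linear_vec_nth] unfolding differentiable_def by blast
next
  assume components: "\<forall>i. (\<lambda>t. f t $ i) differentiable (at x within S)"
  show "f differentiable (at x within S)"
    unfolding differentiable_componentwise_within[of f]
  proof
    fix i :: "real^'n" assume "i \<in> Basis"
    then obtain j where "i = axis j 1" by (auto simp: Basis_vec_def)
    then show "(\<lambda>t. f t \<bullet> i) differentiable (at x within S)"
      using components by (simp add: cart_eq_inner_axis[symmetric])
  qed
qed

lemma subspace_graph_eq_inner:
  fixes Y :: "('a::euclidean_space \<times> real) set"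
  assumes "subspace Y" and single_valued: "\<And>j. (0, j) \<in> Y \<Longrightarrow> j = 0"
  obtains c where "\<And>v j. (v, j) \<in> Y \<Longrightarrow> j = c \<bullet> v"
proof -
  obtain y z where y: "y \<in> span Y" and orth: "\<And>w. w \<in> span Y \<Longrightarrow> orthogonal z w"
    and decomp: "(0::'a, 1::real) = y + z"
    using orthogonal_subspace_decomp_exists by blast
  have "y \<in> Y" using y \<open>subspace Y\<close> by (metis span_eq_iff)
  have "z \<bullet> y = 0" using orth[OF y] by (simp add: orthogonal_def)
  then have "snd z = z \<bullet> z"
    using arg_cong[OF decomp, of "inner z"] by (simp add: inner_add_right inner_Pair_0 inner_commute)
  moreover have "z \<noteq> 0" using decomp \<open>y \<in> Y\<close> single_valued by fastforce
  ultimately have "snd z \<noteq> 0" by simp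
  show thesis
  proof (rule that)
    fix v j assume "(v, j) \<in> Y"
    then have "z \<bullet> (v, j) = 0" using orth span_base by (force simp: orthogonal_def)
    then have "fst z \<bullet> v + snd z * j = 0" by (cases z) simp
    then show "j = (- (1 / snd z) *\<^sub>R fst z) \<bullet> v" using \<open>snd z \<noteq> 0\<close> by (simp add: field_simps)
  qed
qed

definition controlled_trajectory ::
  "(real \<Rightarrow> real^'n^'n) \<Rightarrow> (real \<Rightarrow> real^'r^'n) \<Rightarrow> real \<Rightarrow> real \<Rightarrow> (real \<Rightarrow> real^'n) \<Rightarrow> (real \<Rightarrow> real^'r) \<Rightarrow> bool"
  where "controlled_trajectory A B t0 t1 X G \<longleftrightarrow> X t0 = 0 \<and>
    (\<forall>t\<in>{t0..t1}. (X has_vector_derivative A t *v X t + B t *v G t) (at t within {t0..t1}) \<and>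
                  G differentiable (at t within {t0..t1}))"

lemma controlled_trajectory_zero: "controlled_trajectory A B t0 t1 (\<lambda>t. 0) (\<lambda>t. 0)"
  by (simp add: controlled_trajectory_def)

lemma controlled_trajectory_add:
  assumes "controlled_trajectory A B t0 t1 X1 G1" and "controlled_trajectory A B t0 t1 X2 G2"
  shows "controlled_trajectory A B t0 t1 (\<lambda>t. X1 t + X2 t) (\<lambda>t. G1 t + G2 t)"
  using assms unfolding controlled_trajectory_def
  by (auto intro!: has_vector_derivative_eq_rhs[OF has_vector_derivative_add] differentiable_add
      simp: matrix_vector_right_distrib algebra_simps)

lemma controlled_trajectory_scaleR:
  assumes "controlled_trajectory A B t0 t1 X G"
  shows "controlled_trajectory A B t0 t1 (\<lambda>t. c *\<^sub>R X t) (\<lambda>t. c *\<^sub>R G t)"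
  using assms unfolding controlled_trajectory_def
  by (auto intro!: has_vector_derivative_eq_rhs[OF has_vector_derivative_scaleR[OF DERIV_const]]
      differentiable_scaleR simp: matrix_vector_mult_scaleR algebra_simps)

lemma controlled_trajectory_continuous:
  assumes "controlled_trajectory A B t0 t1 X G"
  shows "continuous_on {t0..t1} X" and "continuous_on {t0..t1} G"
  using assms unfolding controlled_trajectory_def
  by (auto simp: continuous_on_eq_continuous_within
      intro: differentiable_imp_continuous_within has_vector_derivative_continuous)

lemma terminal_covector_exists:
  fixes lq :: "real \<Rightarrow> real^'n" and lz :: "real \<Rightarrow> real^'r"
  assumes "continuous_on {t0..t1} lq" and "continuous_on {t0..t1} lz"
    and vanish: "\<And>X G. controlled_trajectory A B t0 t1 X G \<Longrightarrow> X t1 = 0 \<Longrightarrow>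
                   integral {t0..t1} (\<lambda>t. lq t \<bullet> X t + lz t \<bullet> G t) = 0"
  obtains c where "\<And>X G. controlled_trajectory A B t0 t1 X G \<Longrightarrow>
                   integral {t0..t1} (\<lambda>t. lq t \<bullet> X t + lz t \<bullet> G t) = c \<bullet> X t1"
proof -
  define J where "J X G = integral {t0..t1} (\<lambda>t. lq t \<bullet> X t + lz t \<bullet> G t)" for X G
  have integrable: "(\<lambda>t. lq t \<bullet> X t + lz t \<bullet> G t) integrable_on {t0..t1}"
    if "controlled_trajectory A B t0 t1 X G" for X G
    using assms controlled_trajectory_continuous[OF that]
    by (intro integrable_continuous_interval continuous_intros)
  define Y where "Y = {(X t1, J X G) | X G. controlled_trajectory A B t0 t1 X G}"
  have "subspace Y"
    unfolding subspace_def
  proof (intro conjI ballI allI)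
    have "(0, J (\<lambda>t. 0) (\<lambda>t. 0)) \<in> Y"
      unfolding Y_def by (auto intro!: exI[of _ "\<lambda>t. 0"] controlled_trajectory_zero)
    then show "0 \<in> Y" by (simp add: J_def zero_prod_def)
    fix y1 y2 assume "y1 \<in> Y" "y2 \<in> Y"
    then obtain X1 G1 X2 G2 where traj: "controlled_trajectory A B t0 t1 X1 G1" "controlled_trajectory A B t0 t1 X2 G2"
      and "y1 = (X1 t1, J X1 G1)" "y2 = (X2 t1, J X2 G2)"
      unfolding Y_def by blast
    moreover have "J (\<lambda>t. X1 t + X2 t) (\<lambda>t. G1 t + G2 t) = J X1 G1 + J X2 G2"
      unfolding J_def using integral_add[OF integrable[OF traj(1)] integrable[OF traj(2)]]
      by (simp add: inner_add_right algebra_simps)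
    ultimately show "y1 + y2 \<in> Y"
      unfolding Y_def using controlled_trajectory_add[OF traj] by force
  next
    fix c :: real and y assume "y \<in> Y"
    then obtain X G where "controlled_trajectory A B t0 t1 X G" "y = (X t1, J X G)"
      unfolding Y_def by blast
    moreover have "J (\<lambda>t. c *\<^sub>R X t) (\<lambda>t. c *\<^sub>R G t) = c * J X G"
      unfolding J_def by (simp flip: distrib_left)
    ultimately show "c *\<^sub>R y \<in> Y"
      unfolding Y_def using controlled_trajectory_scaleR by force
  qed
  moreover have "j = 0" if "(0, j) \<in> Y" for j
    using that vanish unfolding Y_def J_def by auto
  ultimately obtain c where "\<And>v j. (v, j) \<in> Y \<Longrightarrow> j = c \<bullet> v"
    using subspace_graph_eq_inner by metis
  then show thesis by (intro that[of c]) (auto simp: Y_def J_def)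
qed

lemma adjoint_pairing_integral:
  fixes p lq :: "real \<Rightarrow> real^'n"
  assumes "t0 \<le> t1"
    and adjoint: "\<And>t. t \<in> {t0..t1} \<Longrightarrow>
           (p has_vector_derivative (- transpose (A t)) *v p t + lq t) (at t within {t0..t1})"
    and traj: "controlled_trajectory A B t0 t1 X G"
  shows "((\<lambda>t. lq t \<bullet> X t + (transpose (B t) *v p t) \<bullet> G t) has_integral p t1 \<bullet> X t1) {t0..t1}"
proof -
  have "((\<lambda>t. p t \<bullet> X t) has_vector_derivative lq t \<bullet> X t + (transpose (B t) *v p t) \<bullet> G t)
          (at t within {t0..t1})" if t: "t \<in> {t0..t1}" for t
  proof -
    have X: "(X has_vector_derivative A t *v X t + B t *v G t) (at t within {t0..t1})"
      using traj t unfolding controlled_trajectory_def by blast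
    have "(- transpose (A t)) *v p t = - (transpose (A t) *v p t)"
      by (simp add: vec_eq_iff matrix_vector_mult_def sum_negf)
    then have "p t \<bullet> (A t *v X t + B t *v G t) + ((- transpose (A t)) *v p t + lq t) \<bullet> X t
             = lq t \<bullet> X t + (transpose (B t) *v p t) \<bullet> G t"
      by (simp add: dot_lmul_matrix inner_add_left inner_add_right inner_diff_left)
    then show ?thesis
      using bounded_bilinear.has_vector_derivative[OF bounded_bilinear_inner adjoint[OF t] X] by simp
  qed
  from fundamental_theorem_of_calculus[OF \<open>t0 \<le> t1\<close> this] traj show ?thesis
    by (simp add: controlled_trajectory_def)
qed

lemma controlled_trajectory_exists:
  fixes A :: "real \<Rightarrow> real^'n^'n" and B :: "real \<Rightarrow> real^'r^'n"
  assumes "\<And>i j. continuous_on {t0..t1} (\<lambda>t. A t $ i $ j)" and "\<And>i j. continuous_on {t0..t1} (\<lambda>t. B t $ i $ j)"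
    and "continuous_on {t0..t1} G" and "\<And>t. t \<in> {t0..t1} \<Longrightarrow> G differentiable (at t within {t0..t1})"
  obtains X where "controlled_trajectory A B t0 t1 X G"
proof -
  have "continuous_on {t0..t1} (\<lambda>t. B t *v G t)"
    unfolding matrix_vector_mult_def by (intro continuous_intros assms)
  then obtain X where "X t0 = 0"
    and "\<And>t. t \<in> {t0..t1} \<Longrightarrow> (X has_vector_derivative A t *v X t + B t *v G t) (at t within {t0..t1})"
    using linear_ode_exists_initial[of t0 t1 A "\<lambda>t. B t *v G t" 0, OF assms(1)] by blast
  with assms(4) show thesis by (intro that[of X]) (simp add: controlled_trajectory_def)
qed

lemma differentiable_transpose_matrix_vector_mult:
  fixes B :: "real \<Rightarrow> real^'r^'n" and p :: "real \<Rightarrow> real^'n"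
  assumes "\<And>i j. (\<lambda>t. B t $ i $ j) differentiable (at x within S)" and "p differentiable (at x within S)"
  shows "(\<lambda>t. transpose (B t) *v p t) differentiable (at x within S)"
  unfolding differentiable_vec_componentwise
proof
  fix j
  have "(\<lambda>t. p t $ i) differentiable (at x within S)" for i
    using assms(2) differentiable_vec_componentwise by blast
  then show "(\<lambda>t. (transpose (B t) *v p t) $ j) differentiable (at x within S)"
    unfolding matrix_vector_mult_def transpose_def
    using assms(1) by (simp add: differentiable_sum differentiable_mult)
qed

lemma linear_control_multiplier:
  fixes A :: "real \<Rightarrow> real^'n^'n" and B :: "real \<Rightarrow> real^'r^'n"
    and lq :: "real \<Rightarrow> real^'n" and lz :: "real \<Rightarrow> real^'r"
  assumes "t0 < t1"
    and continuous_A: "\<And>i j. continuous_on {t0..t1} (\<lambda>t. A t $ i $ j)"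
    and continuous_B: "\<And>i j. continuous_on {t0..t1} (\<lambda>t. B t $ i $ j)"
    and continuous_lq: "continuous_on {t0..t1} lq" and continuous_lz: "continuous_on {t0..t1} lz"
    and differentiable_B: "\<And>i j t. t \<in> {t0..t1} \<Longrightarrow> (\<lambda>t. B t $ i $ j) differentiable (at t within {t0..t1})"
    and differentiable_lz: "\<And>t. t \<in> {t0..t1} \<Longrightarrow> lz differentiable (at t within {t0..t1})"
    and vanish: "\<And>X G. controlled_trajectory A B t0 t1 X G \<Longrightarrow> X t1 = 0 \<Longrightarrow>
                   integral {t0..t1} (\<lambda>t. lq t \<bullet> X t + lz t \<bullet> G t) = 0"
  obtains p where
    "\<And>t. t \<in> {t0..t1} \<Longrightarrow> (p has_vector_derivative (- transpose (A t)) *v p t + lq t) (at t within {t0..t1})"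
    "\<And>t. t \<in> {t0..t1} \<Longrightarrow> transpose (B t) *v p t = lz t"
proof -
  let ?T = "{t0..t1}"
  obtain c where c: "\<And>X G. controlled_trajectory A B t0 t1 X G \<Longrightarrow>
                   integral ?T (\<lambda>t. lq t \<bullet> X t + lz t \<bullet> G t) = c \<bullet> X t1"
    using terminal_covector_exists[OF continuous_lq continuous_lz vanish] by blast
  have "continuous_on ?T (\<lambda>t. (- transpose (A t)) $ i $ j)" for i j
    using continuous_on_minus[OF continuous_A] by (simp add: transpose_def)
  then obtain p where "p t1 = c"
    and adjoint: "\<And>t. t \<in> ?T \<Longrightarrow> (p has_vector_derivative (- transpose (A t)) *v p t + lq t) (at t within ?T)"
    using linear_ode_exists_final[of t0 t1 "\<lambda>t. - transpose (A t)" lq c, OF _ continuous_lq] by blast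
  define f where "f t = lz t - transpose (B t) *v p t" for t
  have "continuous_on ?T p"
    using adjoint by (rule continuous_on_vector_derivative)
  then have continuous_f: "continuous_on ?T f"
    unfolding f_def matrix_vector_mult_def transpose_def by (intro continuous_intros continuous_lz continuous_B)
  moreover have "f differentiable (at t within ?T)" if "t \<in> ?T" for t
    unfolding f_def using that
    by (intro differentiable_diff differentiable_lz differentiable_transpose_matrix_vector_mult
        differentiable_B differentiableI_vector[OF adjoint])
  ultimately obtain X where traj: "controlled_trajectory A B t0 t1 X f"
    using controlled_trajectory_exists[OF continuous_A continuous_B] by blast
  have "(\<lambda>t. lq t \<bullet> X t + lz t \<bullet> f t) integrable_on ?T"
    using controlled_trajectory_continuous[OF traj] continuous_lq continuous_lz
    by (intro integrable_continuous_interval continuous_intros)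
  then have "((\<lambda>t. lq t \<bullet> X t + lz t \<bullet> f t) has_integral c \<bullet> X t1) ?T"
    using c[OF traj] by (metis has_integral_integral)
  from has_integral_diff[OF this adjoint_pairing_integral[OF _ adjoint traj]] \<open>p t1 = c\<close> \<open>t0 < t1\<close>
  have "((\<lambda>t. f t \<bullet> f t) has_integral 0) ?T"
    by (simp add: f_def inner_diff_left)
  then have "f t = 0" if "t \<in> ?T" for t
    using has_integral_0_cbox_imp_0[of t0 t1 "\<lambda>t. f t \<bullet> f t" t] continuous_f that \<open>t0 < t1\<close>
    by (auto intro: continuous_intros)
  with adjoint show thesis by (intro that) (auto simp: f_def)
qed

section \<open>The first variation of the action\<close>

lemma Cinf_on_continuous_on: "Cinf_on U g \<Longrightarrow> continuous_on U g"
  unfolding Cinf_on_def by blast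

lemma Cinf_on_differentiable: "Cinf_on U g \<Longrightarrow> x \<in> U \<Longrightarrow> g differentiable (at x)"
  unfolding Cinf_on_def by blast

lemma Cinf_on_partial: "Cinf_on U g \<Longrightarrow> e \<in> Basis \<Longrightarrow> Cinf_on U (\<lambda>x. frechet_derivative g (at x) e)"
  unfolding Cinf_on_def by blast

lemma linear_eq_sum_axis:
  fixes h :: "real^'n \<Rightarrow> real"
  assumes "linear h"
  shows "h x = (\<Sum>k\<in>UNIV. x $ k * h (axis k 1))"
proof -
  have "h x = h (\<Sum>k\<in>UNIV. x $ k *\<^sub>R axis k 1)"
    using basis_expansion[of x] by (simp add: scalar_mult_eq_scaleR)
  also have "\<dots> = (\<Sum>k\<in>UNIV. x $ k * h (axis k 1))"
    using assms by (simp add: linear_sum linear_scale)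
  finally show ?thesis .
qed

lemma frechet_derivative_eq_pdq_pdz:
  fixes g :: "real \<times> (real^'n::finite) \<times> (real^'r::finite) \<Rightarrow> real"
  assumes "g differentiable (at w)"
  shows "frechet_derivative g (at w) (0, X, G) = (\<Sum>k\<in>UNIV. X $ k * pdq g w k) + (\<Sum>A\<in>UNIV. G $ A * pdz g w A)"
proof -
  define \<phi> where "\<phi> = frechet_derivative g (at w)"
  have "linear \<phi>" unfolding \<phi>_def by (rule linear_frechet_derivative[OF assms])
  moreover have "linear (\<lambda>x :: real^'n. (0 :: real, x, 0 :: real^'r))"
    and "linear (\<lambda>x :: real^'r. (0 :: real, 0 :: real^'n, x))"
    by (auto intro!: linearI)
  ultimately have "linear (\<phi> \<circ> (\<lambda>x. (0, x, 0)))" and "linear (\<phi> \<circ> (\<lambda>x. (0, 0, x)))"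
    by (auto intro: linear_compose)
  moreover have "\<phi> (0, X, G) = \<phi> (0, X, 0) + \<phi> (0, 0, G)"
    using linear_add[OF \<open>linear \<phi>\<close>, of "(0, X, 0)" "(0, 0, G)"] by simp
  ultimately show ?thesis
    using linear_eq_sum_axis[of "\<phi> \<circ> (\<lambda>x. (0, x, 0))" X] linear_eq_sum_axis[of "\<phi> \<circ> (\<lambda>x. (0, 0, x))" G]
    by (simp add: pdq_def pdz_def \<phi>_def)
qed

lemma has_vector_derivative_partial_fst:
  assumes "(F has_derivative F') (at (\<xi>, t) within E \<times> T)" and "\<xi> \<in> E" and "t \<in> T"
  shows "((\<lambda>\<xi>. F (\<xi>, t)) has_vector_derivative F' (1, 0)) (at \<xi> within E)"
proof -
  have "((\<lambda>\<xi>. (\<xi>, t)) has_derivative (\<lambda>h. (h, 0))) (at \<xi> within E)"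
    by (auto intro!: derivative_eq_intros)
  moreover have "(F has_derivative F') (at (\<xi>, t) within (\<lambda>\<xi>. (\<xi>, t)) ` E)"
    using assms by (auto elim!: has_derivative_subset)
  ultimately have "((\<lambda>\<xi>. F (\<xi>, t)) has_derivative (\<lambda>h. F' (h, 0))) (at \<xi> within E)"
    using diff_chain_within unfolding o_def by blast
  moreover have "(\<lambda>h. F' (h, 0)) = (\<lambda>h. h *\<^sub>R F' (1, 0))"
  proof
    fix h :: real
    have "F' (h, 0) = F' (h *\<^sub>R (1, 0))" by simp
    also have "\<dots> = h *\<^sub>R F' (1, 0)" by (rule linear_scale[OF has_derivative_linear[OF assms(1)]])
    finally show "F' (h, 0) = h *\<^sub>R F' (1, 0)" .
  qed
  ultimately show ?thesis unfolding has_vector_derivative_def by (simp only:)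
qed

lemma continuous_on_frechet_derivative_apply:
  fixes g :: "'a::euclidean_space \<Rightarrow> real"
  assumes "\<And>w. w \<in> U \<Longrightarrow> g differentiable (at w)"
    and "\<And>e. e \<in> Basis \<Longrightarrow> continuous_on U (\<lambda>w. frechet_derivative g (at w) e)"
    and "continuous_on S u" and "continuous_on S v" and "u ` S \<subseteq> U"
  shows "continuous_on S (\<lambda>s. frechet_derivative g (at (u s)) (v s))"
proof -
  have expand: "frechet_derivative g (at (u s)) (v s) = (\<Sum>e\<in>Basis. (v s \<bullet> e) * frechet_derivative g (at (u s)) e)"
    if "s \<in> S" for s
  proof -
    have "linear (frechet_derivative g (at (u s)))"
      using assms(1,5) that by (auto intro: linear_frechet_derivative)
    then show ?thesis
      by (subst euclidean_representation[of "v s", symmetric]) (simp add: linear_sum linear_scale)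
  qed
  have "continuous_on S (\<lambda>s. \<Sum>e\<in>Basis. (v s \<bullet> e) * frechet_derivative g (at (u s)) e)"
    using continuous_on_compose2[OF assms(2) assms(3,5)] assms(4)
    by (intro continuous_on_sum continuous_on_mult continuous_on_inner continuous_on_const) auto
  then show ?thesis by (rule continuous_on_eq) (simp add: expand)
qed

lemma has_vector_derivative_frechet_chain:
  assumes "(\<gamma> has_vector_derivative v) (at x within S)" and "L differentiable (at (\<gamma> x))"
  shows "((\<lambda>x. L (\<gamma> x)) has_vector_derivative frechet_derivative L (at (\<gamma> x)) v) (at x within S)"
proof -
  let ?L' = "frechet_derivative L (at (\<gamma> x))"
  have "((L \<circ> \<gamma>) has_derivative (?L' \<circ> (\<lambda>h. h *\<^sub>R v))) (at x within S)"
    using assms(1) frechet_derivative_works[THEN iffD1, OF assms(2)] unfolding has_vector_derivative_def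
    by (blast intro: diff_chain_within has_derivative_at_withinI)
  moreover have "?L' \<circ> (\<lambda>h. h *\<^sub>R v) = (\<lambda>h. h *\<^sub>R ?L' v)"
    using linear_scale[OF linear_frechet_derivative[OF assms(2)]] by (auto simp: o_def)
  ultimately show ?thesis unfolding has_vector_derivative_def by (simp add: o_def)
qed

lemma has_real_derivative_parametric_integral:
  fixes L :: "real \<times> 'b::euclidean_space \<Rightarrow> real" and F :: "real \<times> real \<Rightarrow> 'b"
  assumes L_differentiable: "\<And>w. w \<in> U \<Longrightarrow> L differentiable (at w)"
    and L_continuous: "continuous_on U L"
    and L_partials_continuous: "\<And>e. e \<in> Basis \<Longrightarrow> continuous_on U (\<lambda>w. frechet_derivative L (at w) e)"
    and F': "\<And>w. w \<in> E \<times> {t0..t1} \<Longrightarrow> (F has_derivative F' w) (at w within E \<times> {t0..t1})"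
    and F'_continuous: "\<And>h. continuous_on (E \<times> {t0..t1}) (\<lambda>w. F' w h)"
    and in_U: "\<And>\<xi> t. \<xi> \<in> E \<Longrightarrow> t \<in> {t0..t1} \<Longrightarrow> (t, F (\<xi>, t)) \<in> U"
    and "0 \<in> E" "open E" "convex E"
  shows "((\<lambda>\<xi>. integral {t0..t1} (\<lambda>t. L (t, F (\<xi>, t)))) has_real_derivative
           integral {t0..t1} (\<lambda>t. frechet_derivative L (at (t, F (0, t))) (0, F' (0, t) (1, 0)))) (at 0)"
proof -
  let ?T = "{t0..t1}"
  define D where "D \<xi> t = frechet_derivative L (at (t, F (\<xi>, t))) (0, F' (\<xi>, t) (1, 0))" for \<xi> t
  have L_derivative: "((\<lambda>\<xi>. L (t, F (\<xi>, t))) has_vector_derivative D \<xi> t) (at \<xi> within E)"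
    if "\<xi> \<in> E" "t \<in> ?T" for \<xi> t
    unfolding D_def using that
    by (intro has_vector_derivative_frechet_chain[where \<gamma>="\<lambda>\<xi>. (t, F (\<xi>, t))"] has_vector_derivative_Pair
        has_vector_derivative_const has_vector_derivative_partial_fst[OF F'] L_differentiable in_U) auto
  have "continuous_on (E \<times> ?T) F"
    by (rule has_derivative_continuous_on) (rule F')
  then have curve_continuous: "continuous_on (E \<times> ?T) (\<lambda>p. (snd p, F p))"
    by (intro continuous_intros)
  have curve_in_U: "(\<lambda>p. (snd p, F p)) ` (E \<times> ?T) \<subseteq> U"
    using in_U by auto
  have "continuous_on (E \<times> ?T) (\<lambda>p. frechet_derivative L (at (snd p, F p)) (0, F' p (1, 0)))"
    using F'_continuous
    by (intro continuous_on_frechet_derivative_apply[OF L_differentiable L_partials_continuous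
          curve_continuous _ curve_in_U] continuous_intros)
  then have D_continuous: "continuous_on (E \<times> cbox t0 t1) (\<lambda>(\<xi>, t). D \<xi> t)"
    by (simp add: D_def case_prod_beta')
  have "(\<lambda>t. L (t, F (\<xi>, t))) integrable_on cbox t0 t1" if "\<xi> \<in> E" for \<xi>
  proof -
    have "continuous_on ?T (\<lambda>t. (snd (\<xi>, t), F (\<xi>, t)))"
      using that by (intro continuous_on_compose2[OF curve_continuous] continuous_intros) auto
    then have "continuous_on ?T (\<lambda>t. L (t, F (\<xi>, t)))"
      using that in_U by (intro continuous_on_compose2[OF L_continuous]) auto
    then show ?thesis by (simp add: integrable_continuous_real)
  qed
  from leibniz_rule_vector_derivative[OF L_derivative this D_continuous \<open>0 \<in> E\<close> \<open>convex E\<close>] show ?thesis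
    using at_within_open[OF \<open>0 \<in> E\<close> \<open>open E\<close>]
    by (simp add: D_def has_real_derivative_iff_has_vector_derivative)
qed

lemma first_variation:
  fixes L :: "real \<times> (real^'n::finite) \<times> (real^'r::finite) \<Rightarrow> real"
  assumes L_differentiable: "\<And>w. w \<in> U \<Longrightarrow> L differentiable (at w)"
    and L_continuous: "continuous_on U L"
    and L_partials_continuous: "\<And>e. e \<in> Basis \<Longrightarrow> continuous_on U (\<lambda>w. frechet_derivative L (at w) e)"
    and deformation: "adm_deformation U \<psi> t0 t1 q z Q Z"
    and tangent_Q: "\<And>t. t \<in> {t0..t1} \<Longrightarrow> ((\<lambda>\<xi>. Q \<xi> t) has_vector_derivative X t) (at 0)"
    and tangent_Z: "\<And>t. t \<in> {t0..t1} \<Longrightarrow> ((\<lambda>\<xi>. Z \<xi> t) has_vector_derivative G t) (at 0)"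
  shows "((\<lambda>\<xi>. integral {t0..t1} (\<lambda>t. L (t, Q \<xi> t, Z \<xi> t))) has_real_derivative
           integral {t0..t1} (\<lambda>t. frechet_derivative L (at (t, q t, z t)) (0, X t, G t))) (at 0)"
proof -
  let ?T = "{t0..t1}"
  define F where "F = (\<lambda>(\<xi>, t). (Q \<xi> t, Z \<xi> t))"
  obtain \<epsilon> where "\<epsilon> > 0"
    and admissible: "\<And>\<xi>. \<xi> \<in> {-\<epsilon><..<\<epsilon>} \<Longrightarrow> admissible_lift U \<psi> t0 t1 (Q \<xi>) (Z \<xi>)"
    and at_0: "\<And>t. t \<in> ?T \<Longrightarrow> Q 0 t = q t \<and> Z 0 t = z t"
    and "C1_family ({-\<epsilon><..<\<epsilon>} \<times> ?T) F"
    using deformation unfolding adm_deformation_def F_def by blast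
  define E where "E = {-\<epsilon><..<\<epsilon>}"
  have "0 \<in> E" "open E" "convex E" using \<open>\<epsilon> > 0\<close> by (auto simp: E_def)
  from \<open>C1_family ({-\<epsilon><..<\<epsilon>} \<times> ?T) F\<close>
  obtain F' where F': "\<And>w. w \<in> E \<times> ?T \<Longrightarrow> (F has_derivative F' w) (at w within E \<times> ?T)"
    and F'_continuous: "\<And>h. continuous_on (E \<times> ?T) (\<lambda>w. F' w h)"
    unfolding C1_family_def E_def by blast
  have in_U: "(t, F (\<xi>, t)) \<in> U" if "\<xi> \<in> E" "t \<in> ?T" for \<xi> t
    using admissible that unfolding admissible_lift_def E_def F_def by auto
  have "F' (0, t) (1, 0) = (X t, G t)" if "t \<in> ?T" for t
  proof (rule vector_derivative_unique_at)
    show "((\<lambda>\<xi>. F (\<xi>, t)) has_vector_derivative F' (0, t) (1, 0)) (at 0)"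
      using has_vector_derivative_partial_fst[OF F' \<open>0 \<in> E\<close> that] \<open>0 \<in> E\<close> that
        at_within_open[OF \<open>0 \<in> E\<close> \<open>open E\<close>]
      by simp
    show "((\<lambda>\<xi>. F (\<xi>, t)) has_vector_derivative (X t, G t)) (at 0)"
      unfolding F_def using has_vector_derivative_Pair[OF tangent_Q tangent_Z] that by simp
  qed
  with at_0 have "integral ?T (\<lambda>t. frechet_derivative L (at (t, F (0, t))) (0, F' (0, t) (1, 0)))
                = integral ?T (\<lambda>t. frechet_derivative L (at (t, q t, z t)) (0, X t, G t))"
    by (intro integral_cong) (simp add: F_def)
  with has_real_derivative_parametric_integral[OF L_differentiable L_continuous L_partials_continuous
      F' F'_continuous in_U \<open>0 \<in> E\<close> \<open>open E\<close> \<open>convex E\<close>]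
  show ?thesis by (simp add: F_def)
qed

section \<open>Extremals of the constrained action\<close>

lemma Cinf_on_pdq: "Cinf_on U g \<Longrightarrow> Cinf_on U (\<lambda>w. pdq g w k)"
  unfolding pdq_def by (erule Cinf_on_partial) (auto simp: Basis_prod_def)

lemma Cinf_on_pdz: "Cinf_on U g \<Longrightarrow> Cinf_on U (\<lambda>w. pdz g w A)"
  unfolding pdz_def by (erule Cinf_on_partial) (auto simp: Basis_prod_def)

lemma Cinf_on_differentiable_along:
  assumes "Cinf_on U h" and "w differentiable (at t within T)" and "w t \<in> U"
  shows "(\<lambda>t. h (w t)) differentiable (at t within T)"
  using differentiable_chain_within[OF assms(2) differentiable_at_withinI[OF Cinf_on_differentiable[OF assms(1,3)]]]
  by (simp add: o_def)

lemma admissible_lift_differentiable: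
  assumes "admissible_lift U \<psi> t0 t1 q z" and "t \<in> {t0..t1}"
  shows "(\<lambda>t. (t, q t, z t)) differentiable (at t within {t0..t1})"
proof -
  have q: "(q has_vector_derivative \<psi> (t, q t, z t)) (at t within {t0..t1})"
    and z: "z differentiable (at t within {t0..t1})"
    using assms unfolding admissible_lift_def by blast+
  show ?thesis by (intro differentiable_Pair differentiable_ident differentiableI_vector[OF q] z)
qed

definition jacobian_q :: "(real \<times> (real^'n::finite) \<times> (real^'r::finite) \<Rightarrow> real^'n) \<Rightarrow> real \<times> (real^'n) \<times> (real^'r) \<Rightarrow> real^'n^'n"
  where "jacobian_q \<psi> w = (\<chi> i k. pdq (\<lambda>v. \<psi> v $ i) w k)"

definition jacobian_z :: "(real \<times> (real^'n::finite) \<times> (real^'r::finite) \<Rightarrow> real^'n) \<Rightarrow> real \<times> (real^'n) \<times> (real^'r) \<Rightarrow> real^'r^'n"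
  where "jacobian_z \<psi> w = (\<chi> i A. pdz (\<lambda>v. \<psi> v $ i) w A)"

definition gradient_q :: "(real \<times> (real^'n::finite) \<times> (real^'r::finite) \<Rightarrow> real) \<Rightarrow> real \<times> (real^'n) \<times> (real^'r) \<Rightarrow> real^'n"
  where "gradient_q L w = (\<chi> k. pdq L w k)"

definition gradient_z :: "(real \<times> (real^'n::finite) \<times> (real^'r::finite) \<Rightarrow> real) \<Rightarrow> real \<times> (real^'n) \<times> (real^'r) \<Rightarrow> real^'r"
  where "gradient_z L w = (\<chi> A. pdz L w A)"

lemma adm_inf_deformation_iff_controlled_trajectory:
  "adm_inf_deformation \<psi> t0 t1 q z X G \<and> X t0 = 0 \<longleftrightarrow>
   controlled_trajectory (\<lambda>t. jacobian_q \<psi> (t, q t, z t)) (\<lambda>t. jacobian_z \<psi> (t, q t, z t)) t0 t1 X G"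
proof -
  have "(\<chi> i. (\<Sum>k\<in>UNIV. pdq (\<lambda>w. \<psi> w $ i) (t, q t, z t) k * X t $ k) +
              (\<Sum>A\<in>UNIV. pdz (\<lambda>w. \<psi> w $ i) (t, q t, z t) A * G t $ A))
        = jacobian_q \<psi> (t, q t, z t) *v X t + jacobian_z \<psi> (t, q t, z t) *v G t" for t
    by (simp add: vec_eq_iff matrix_vector_mult_def jacobian_q_def jacobian_z_def)
  then show ?thesis
    unfolding adm_inf_deformation_def controlled_trajectory_def by auto
qed

lemma extremal_first_variation_vanishes:
  assumes L_smooth: "Cinf_on U L"
    and curve_in_U: "\<And>t. t \<in> {t0..t1} \<Longrightarrow> (t, q t, z t) \<in> U"
    and ord: "ordinary U \<psi> t0 t1 q z" and ext: "extremal U \<psi> L t0 t1 q z"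
    and traj: "controlled_trajectory (\<lambda>t. jacobian_q \<psi> (t, q t, z t)) (\<lambda>t. jacobian_z \<psi> (t, q t, z t)) t0 t1 X G"
    and "X t1 = 0"
  shows "integral {t0..t1} (\<lambda>t. gradient_q L (t, q t, z t) \<bullet> X t + gradient_z L (t, q t, z t) \<bullet> G t) = 0"
proof -
  obtain Q Z where deformation: "adm_deformation U \<psi> t0 t1 q z Q Z"
    and tangent: "\<And>t. t \<in> {t0..t1} \<Longrightarrow> ((\<lambda>\<xi>. Q \<xi> t) has_vector_derivative X t) (at 0) \<and>
                                        ((\<lambda>\<xi>. Z \<xi> t) has_vector_derivative G t) (at 0)"
    using ord traj \<open>X t1 = 0\<close> adm_inf_deformation_iff_controlled_trajectory unfolding ordinary_def by blast
  have "((\<lambda>\<xi>. integral {t0..t1} (\<lambda>t. L (t, Q \<xi> t, Z \<xi> t))) has_real_derivative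
           integral {t0..t1} (\<lambda>t. frechet_derivative L (at (t, q t, z t)) (0, X t, G t))) (at 0)"
    using tangent
    by (intro first_variation[OF Cinf_on_differentiable[OF L_smooth] Cinf_on_continuous_on[OF L_smooth]
          Cinf_on_continuous_on[OF Cinf_on_partial[OF L_smooth]] deformation]) auto
  moreover have "((\<lambda>\<xi>. integral {t0..t1} (\<lambda>t. L (t, Q \<xi> t, Z \<xi> t))) has_real_derivative 0) (at 0)"
    using ext deformation unfolding extremal_def by blast
  ultimately have "integral {t0..t1} (\<lambda>t. frechet_derivative L (at (t, q t, z t)) (0, X t, G t)) = 0"
    by (rule DERIV_unique)
  moreover have "frechet_derivative L (at (t, q t, z t)) (0, X t, G t)
                 = gradient_q L (t, q t, z t) \<bullet> X t + gradient_z L (t, q t, z t) \<bullet> G t"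
    if "t \<in> {t0..t1}" for t
    using frechet_derivative_eq_pdq_pdz[OF Cinf_on_differentiable[OF L_smooth curve_in_U[OF that]]]
    by (simp add: gradient_q_def gradient_z_def inner_vec_def mult.commute)
  ultimately show ?thesis by (metis (no_types, lifting) integral_cong)
qed

lemma extremal_adjoint_multiplier:
  fixes \<psi> :: "real \<times> (real^'n::finite) \<times> (real^'r::finite) \<Rightarrow> real^'n"
  assumes psi_smooth: "\<forall>i. Cinf_on U (\<lambda>w. \<psi> w $ i)" and L_smooth: "Cinf_on U L"
    and "t0 < t1" and adm: "admissible_lift U \<psi> t0 t1 q z"
    and ord: "ordinary U \<psi> t0 t1 q z" and ext: "extremal U \<psi> L t0 t1 q z"
  obtains p where
    "\<And>t. t \<in> {t0..t1} \<Longrightarrow> (p has_vector_derivative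
        (- transpose (jacobian_q \<psi> (t, q t, z t))) *v p t + gradient_q L (t, q t, z t)) (at t within {t0..t1})"
    "\<And>t. t \<in> {t0..t1} \<Longrightarrow> transpose (jacobian_z \<psi> (t, q t, z t)) *v p t = gradient_z L (t, q t, z t)"
proof (rule linear_control_multiplier[OF \<open>t0 < t1\<close>])
  have curve_in_U: "(t, q t, z t) \<in> U" if "t \<in> {t0..t1}" for t
    using adm that unfolding admissible_lift_def by blast
  have "continuous_on {t0..t1} (\<lambda>t. (t, q t, z t))"
    using admissible_lift_differentiable[OF adm]
    by (auto simp: continuous_on_eq_continuous_within intro: differentiable_imp_continuous_within)
  then have along: "continuous_on {t0..t1} (\<lambda>t. h (t, q t, z t))" if "Cinf_on U h" for h
    using continuous_on_compose2[OF Cinf_on_continuous_on[OF that]] curve_in_U by blast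
  show "continuous_on {t0..t1} (\<lambda>t. jacobian_q \<psi> (t, q t, z t) $ i $ j)"
    and "continuous_on {t0..t1} (\<lambda>t. jacobian_z \<psi> (t, q t, z t) $ i $ k)" for i j k
    using along[OF Cinf_on_pdq] along[OF Cinf_on_pdz] psi_smooth by (simp_all add: jacobian_q_def jacobian_z_def)
  show "continuous_on {t0..t1} (\<lambda>t. gradient_q L (t, q t, z t))"
    and "continuous_on {t0..t1} (\<lambda>t. gradient_z L (t, q t, z t))"
    unfolding gradient_q_def gradient_z_def by (intro continuous_on_vec_lambda along Cinf_on_pdq Cinf_on_pdz L_smooth)+
  fix t assume t: "t \<in> {t0..t1}"
  note differentiable_pdz =
    Cinf_on_differentiable_along[OF Cinf_on_pdz admissible_lift_differentiable[OF adm t] curve_in_U[OF t]]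
  show "(\<lambda>t. jacobian_z \<psi> (t, q t, z t) $ i $ k) differentiable (at t within {t0..t1})" for i k
    using differentiable_pdz[OF psi_smooth[rule_format, of i]] by (simp add: jacobian_z_def)
  show "(\<lambda>t. gradient_z L (t, q t, z t)) differentiable (at t within {t0..t1})"
    using differentiable_pdz[OF L_smooth] by (simp add: gradient_z_def differentiable_vec_componentwise)
next
  fix X G
  assume "controlled_trajectory (\<lambda>t. jacobian_q \<psi> (t, q t, z t)) (\<lambda>t. jacobian_z \<psi> (t, q t, z t)) t0 t1 X G"
    and "X t1 = 0"
  then show "integral {t0..t1} (\<lambda>t. gradient_q L (t, q t, z t) \<bullet> X t + gradient_z L (t, q t, z t) \<bullet> G t) = 0"
    using extremal_first_variation_vanishes[OF L_smooth _ ord ext] adm unfolding admissible_lift_def by blast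
qed blast

theorem theorem2p1:
  fixes U :: "(real \<times> (real^'n::finite) \<times> (real^'r::finite)) set"
    and \<psi> :: "real \<times> (real^'n::finite) \<times> (real^'r::finite) \<Rightarrow> real^'n"
    and L :: "real \<times> (real^'n::finite) \<times> (real^'r::finite) \<Rightarrow> real"
    and q :: "real \<Rightarrow> real^'n" and z :: "real \<Rightarrow> real^'r"
    and t0 t1 :: real
  assumes "open U"
    and psi_smooth: "\<forall>i. Cinf_on U (\<lambda>w. \<psi> w $ i)"
    and L_smooth: "Cinf_on U L"
    and "\<forall>w\<in>U. rank (\<chi> i A. pdz (\<lambda>v. \<psi> v $ i) w A) = CARD('r)"
    and "t0 < t1"
    and adm: "admissible_lift U \<psi> t0 t1 q z"
    and ord: "ordinary U \<psi> t0 t1 q z"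
    and ext: "extremal U \<psi> L t0 t1 q z"
  shows "\<exists>p p' :: real \<Rightarrow> real^'n. \<forall>t\<in>{t0..t1}.
           (p has_vector_derivative p' t) (at t within {t0..t1}) \<and>
           (\<forall>i. p' t $ i + (\<Sum>k\<in>UNIV. p t $ k * pdq (\<lambda>w. \<psi> w $ k) (t, q t, z t) i)
                  = pdq L (t, q t, z t) i) \<and>
           (\<forall>A. (\<Sum>k\<in>UNIV. p t $ k * pdz (\<lambda>w. \<psi> w $ k) (t, q t, z t) A)
                  = pdz L (t, q t, z t) A)"
proof -
  obtain p where adjoint: "\<And>t. t \<in> {t0..t1} \<Longrightarrow> (p has_vector_derivative
        (- transpose (jacobian_q \<psi> (t, q t, z t))) *v p t + gradient_q L (t, q t, z t)) (at t within {t0..t1})"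
    and constraint: "\<And>t. t \<in> {t0..t1} \<Longrightarrow>
        transpose (jacobian_z \<psi> (t, q t, z t)) *v p t = gradient_z L (t, q t, z t)"
    using extremal_adjoint_multiplier[OF psi_smooth L_smooth \<open>t0 < t1\<close> adm ord ext] by blast
  show ?thesis
  proof (rule exI[of _ p],
      rule exI[of _ "\<lambda>t. (- transpose (jacobian_q \<psi> (t, q t, z t))) *v p t + gradient_q L (t, q t, z t)"],
      intro ballI conjI allI)
    fix t assume t: "t \<in> {t0..t1}"
    then show "(p has_vector_derivative (- transpose (jacobian_q \<psi> (t, q t, z t))) *v p t + gradient_q L (t, q t, z t))
        (at t within {t0..t1})"
      by (rule adjoint)
    show "((- transpose (jacobian_q \<psi> (t, q t, z t))) *v p t + gradient_q L (t, q t, z t)) $ i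
          + (\<Sum>k\<in>UNIV. p t $ k * pdq (\<lambda>w. \<psi> w $ k) (t, q t, z t) i) = pdq L (t, q t, z t) i" for i
      by (simp add: matrix_vector_mult_def transpose_def jacobian_q_def gradient_q_def sum_negf mult.commute)
    show "(\<Sum>k\<in>UNIV. p t $ k * pdz (\<lambda>w. \<psi> w $ k) (t, q t, z t) A) = pdz L (t, q t, z t) A" for A
      using arg_cong[OF constraint[OF t], of "\<lambda>v. v $ A"]
      by (simp add: matrix_vector_mult_def transpose_def jacobian_z_def gradient_z_def mult.commute)
  qed
qed

end
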